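(* Let $S_0,S_1\in\mathbb{R}$ and let $\pi_0,\pi_1>0$ with $\pi_0+\pi_1=1$ and $\pi_0\neq\pi_1$. For a real control signal $l$ and $\Delta>0$, consider the binary-input binary-output channel from $H\in\{0,1\}$ (with $\Pr(H=i)=\pi_i$) to $Y\in\{0,1\}$ given by $P_{Y|H}(0\mid i)=e^{-\lambda_i\Delta}$, $P_{Y|H}(1\mid i)=1-e^{-\lambda_i\Delta}$, where $\lambda_i=(S_i+l)^2$, and let $I_l(\Delta)=I(H;Y)$ be its mutual information. Then, in the limit of infinitesimal interval $\Delta\to 0$, the choice of $l$ maximizing the mutual information $I(H;Y)$ is $$l^*=\frac{S_0\pi_0-S_1\pi_1}{\pi_1-\pi_0},$$ in the sense that $\lim_{\Delta\to 0}I_{l^*}(\Delta)/\Delta\ \ge\ \lim_{\Delta\to0} I_l(\Delta)/\Delta$ for every real $l$; and with this choice, $\pi_0\sqrt{\lambda_0}=\pi_1\sqrt{\lambda_1}$.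
   Context: $\lambda_i$ is the rate of the Poisson photon-arrival process at the detector under hypothesis $H=i$ when the received coherent-state amplitude $S_i$ is displaced by the local control amplitude $l$; $Y$ indicates zero or one photon arrival in an interval of length $\Delta$. Mutual information is in nats. *)

theory Defs
  imports "HOL-Analysis.Analysis"
begin

definition rate :: "real \<Rightarrow> real \<Rightarrow> real" where
  "rate S l = (S + l)^2"

definition chan :: "real \<Rightarrow> real \<Rightarrow> nat \<Rightarrow> real" where
  "chan lam d y = (if y = 0 then exp (- lam * d) else 1 - exp (- lam * d))"

definition mutual_info_bin :: "(nat \<Rightarrow> real) \<Rightarrow> (nat \<Rightarrow> nat \<Rightarrow> real) \<Rightarrow> real" where
  "mutual_info_bin pr W =
     (\<Sum>i\<in>{0,1::nat}. \<Sum>y\<in>{0,1::nat}.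
        let p = pr i * W i y; q = (\<Sum>j\<in>{0,1::nat}. pr j * W j y)
        in if p = 0 then 0 else p * ln (W i y / q))"

definition I_l :: "(nat \<Rightarrow> real) \<Rightarrow> (nat \<Rightarrow> real) \<Rightarrow> real \<Rightarrow> real \<Rightarrow> real" where
  "I_l S pr l d = mutual_info_bin pr (\<lambda>i y. chan (rate (S i) l) d y)"

end

theory Submission
  imports Defs
begin

text \<open>As the interval length tends to 0, \<open>I\<^sub>l(\<Delta>)/\<Delta>\<close> tends to
  \<open>\<pi>\<^sub>0 \<lambda>\<^sub>0 ln (\<lambda>\<^sub>0/m) + \<pi>\<^sub>1 \<lambda>\<^sub>1 ln (\<lambda>\<^sub>1/m)\<close> with \<open>m = \<pi>\<^sub>0 \<lambda>\<^sub>0 + \<pi>\<^sub>1 \<lambda>\<^sub>1\<close>;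
  the output "no arrival" only contributes \<open>o(\<Delta>)\<close>. Put \<open>x\<^sub>i = S\<^sub>i + l\<close>, so \<open>\<lambda>\<^sub>i = x\<^sub>i\<^sup>2\<close>
  and \<open>x\<^sub>0 - x\<^sub>1 = S\<^sub>0 - S\<^sub>1\<close> is independent of \<open>l\<close>. The limit is the quadratic form
  \<open>A x\<^sub>0\<^sup>2 + B x\<^sub>1\<^sup>2\<close> with \<open>A = \<pi>\<^sub>0 ln (\<lambda>\<^sub>0/m)\<close>, \<open>B = \<pi>\<^sub>1 ln (\<lambda>\<^sub>1/m)\<close>, and it is at most
  \<open>K (x\<^sub>0 - x\<^sub>1)\<^sup>2\<close> for \<open>K = \<pi>\<^sub>0 \<pi>\<^sub>1 / LM(\<pi>\<^sub>0, \<pi>\<^sub>1)\<close>, where \<open>LM\<close> is the logarithmic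
  mean; equality holds when \<open>x\<^sub>0 : x\<^sub>1 = \<pi>\<^sub>1 : \<pi>\<^sub>0\<close>, which is the choice \<open>l\<^sup>*\<close>.
  Domination of the form by \<open>K (x\<^sub>0 - x\<^sub>1)\<^sup>2\<close> amounts to \<open>AB \<ge> K (A + B)\<close>, a
  one-variable inequality that is an instance of the superadditivity of \<open>LM\<close>; the latter
  follows by integrating the pointwise Hoelder inequality over the representation
  \<open>LM(a, b) = \<integral>\<^sub>0\<^sup>1 a\<^sup>1\<^sup>-\<^sup>t b\<^sup>t dt\<close>.\<close>

definition log_mean :: "real \<Rightarrow> real \<Rightarrow> real" where
  "log_mean a b = (if a = b then a else (a - b) / (ln a - ln b))"

lemma log_mean_commute: "log_mean a b = log_mean b a"
proof -
  have "(a - b) / (ln a - ln b) = (b - a) / (ln b - ln a)"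
    by (metis minus_diff_eq minus_divide_divide)
  then show ?thesis by (simp add: log_mean_def)
qed

lemma log_mean_pos:
  assumes "a > 0" "b > 0"
  shows "log_mean a b > 0"
proof (cases a b rule: linorder_cases)
  case less
  then show ?thesis using assms by (simp add: log_mean_def divide_neg_neg)
next
  case greater
  then show ?thesis using assms by (simp add: log_mean_def)
qed (use assms in \<open>simp add: log_mean_def\<close>)

lemma log_mean_mult:
  assumes "c > 0" "a > 0" "b > 0"
  shows "log_mean (c * a) (c * b) = c * log_mean a b"
  using assms by (simp add: log_mean_def ln_mult right_diff_distrib[symmetric])

lemma has_integral_exp_linear:
  fixes k :: real
  assumes "k \<noteq> 0"
  shows "((\<lambda>t. exp (k * t)) has_integral (exp k - 1) / k) {0..1}"
proof -
  have "((\<lambda>t. exp (k * t)) has_integral (exp (k * 1) / k - exp (k * 0) / k)) {0..1}"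
    using assms
    by (intro fundamental_theorem_of_calculus)
       (auto intro!: derivative_eq_intros simp: has_real_derivative_iff_has_vector_derivative[symmetric])
  then show ?thesis by (simp add: diff_divide_distrib)
qed

lemma log_mean_has_integral:
  assumes "a > 0" "b > 0"
  shows "((\<lambda>t. a powr (1 - t) * b powr t) has_integral log_mean a b) {0..1}"
proof (cases "a = b")
  case True
  have "a powr (1 - t) * b powr t = a" for t
    using True assms by (simp add: powr_add[symmetric])
  then show ?thesis
    using True has_integral_const_real[of a 0 1] by (simp add: log_mean_def)
next
  case False
  then have "ln b - ln a \<noteq> 0" using assms by simp
  moreover have "exp (ln b - ln a) = b / a"
    using assms by (simp add: exp_diff)
  ultimately have "((\<lambda>t. a * exp ((ln b - ln a) * t)) has_integral a * ((b / a - 1) / (ln b - ln a))) {0..1}"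
    by (metis has_integral_exp_linear has_integral_mult_right)
  moreover have "a * ((b / a - 1) / (ln b - ln a)) = log_mean a b"
    using False assms by (simp add: log_mean_def field_simps minus_divide_divide)
  moreover have "a powr (1 - t) * b powr t = a * exp ((ln b - ln a) * t)" for t
  proof -
    have "a powr (1 - t) * b powr t = exp (ln a + (ln b - ln a) * t)"
      using assms by (simp add: powr_def exp_add[symmetric] algebra_simps)
    then show ?thesis
      using assms by (simp add: exp_add)
  qed
  ultimately show ?thesis by simp
qed

lemma weighted_geometric_mean_superadditive:
  fixes a b c e t :: real
  assumes "a > 0" "b > 0" "c > 0" "e > 0" "0 \<le> t" "t \<le> 1"
  shows "a powr (1 - t) * b powr t + c powr (1 - t) * e powr t \<le> (a + c) powr (1 - t) * (b + e) powr t"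
proof -
  have "(a / (a + c)) powr (1 - t) * (b / (b + e)) powr t + (c / (a + c)) powr (1 - t) * (e / (b + e)) powr t
      \<le> ((1 - t) * (a / (a + c)) + t * (b / (b + e))) + ((1 - t) * (c / (a + c)) + t * (e / (b + e)))"
    using assms by (intro add_mono Youngs_inequality_0) auto
  also have "\<dots> = (1 - t) * (a / (a + c) + c / (a + c)) + t * (b / (b + e) + e / (b + e))"
    by (simp add: algebra_simps)
  also have "\<dots> = 1"
    using assms by (simp add: add_divide_distrib[symmetric])
  finally show ?thesis
    using assms by (simp add: powr_divide add_divide_distrib[symmetric] divide_le_eq)
qed

lemma log_mean_superadditive:
  assumes "a > 0" "b > 0" "c > 0" "e > 0"
  shows "log_mean a b + log_mean c e \<le> log_mean (a + c) (b + e)"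
  using assms
  by (intro has_integral_le[OF has_integral_add[OF log_mean_has_integral log_mean_has_integral]
        log_mean_has_integral] weighted_geometric_mean_superadditive) auto

lemma log_mean_mono:
  assumes "a > 0" "b > 0" "b \<le> b'"
  shows "log_mean a b \<le> log_mean a b'"
  using assms
  by (intro has_integral_le[OF log_mean_has_integral log_mean_has_integral] mult_left_mono powr_mono2) auto

lemma log_mean_le_inverse_ln_sum:
  fixes p q X :: real
  assumes p: "p > 0" and q: "q > 0" and pq: "p + q = 1" and X: "p < X" "X < 1"
  shows "log_mean p q \<le> q / ln (X / p) + p / ln ((1 - X) / q)"
proof -
  define Y d where "Y = 1 - X" and "d = X - p"
  have Y: "0 < Y" "Y < q" and d: "d > 0" "q - Y = d" "X - p = d" "X = p + d" "q = Y + d"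
    using X pq by (auto simp: Y_def d_def)
  \<comment> \<open>The two pairs add up to \<open>q \<cdot> (X, p)\<close>\<close>
  have "log_mean (p * q) (p * Y) + log_mean (d * q) (d * p) \<le> log_mean (p * q + d * q) (p * Y + d * p)"
    using p q Y d by (intro log_mean_superadditive) auto
  also have "\<dots> = log_mean (q * X) (q * p)"
    using d(4,5) by (simp add: algebra_simps)
  finally have "p * log_mean q Y + d * log_mean q p \<le> q * log_mean X p"
    using p q Y d X by (simp add: log_mean_mult)
  moreover have "log_mean q Y = - d / ln (Y / q)" and "log_mean X p = d / ln (X / p)"
    using p q Y d X by (auto simp: log_mean_def ln_div minus_divide_right)
  ultimately have "d * log_mean p q \<le> d * (q / ln (X / p) + p / ln (Y / q))"
    by (simp add: log_mean_commute algebra_simps)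
  then show ?thesis
    using d by (simp add: Y_def)
qed

lemma quadratic_form_le_square_diff:
  fixes K A B x y :: real
  assumes "B < K" and "A * B \<ge> K * (A + B)"
  shows "A * x^2 + B * y^2 \<le> K * (x - y)^2"
proof -
  have "(K - B) * (K * (x - y)^2 - A * x^2 - B * y^2) = ((K - B) * y - K * x)^2 + (A * B - K * (A + B)) * x^2"
    by (simp add: power2_eq_square algebra_simps)
  also have "\<dots> \<ge> 0"
    using assms by simp
  finally show ?thesis
    using assms by (simp add: zero_le_mult_iff)
qed

definition info_rate :: "real \<Rightarrow> real \<Rightarrow> real \<Rightarrow> real \<Rightarrow> real" where
  "info_rate p0 p1 a0 a1 = (if a0 = 0 then 0 else p0 * a0 * ln (a0 / (p0 * a0 + p1 * a1)))
                         + (if a1 = 0 then 0 else p1 * a1 * ln (a1 / (p0 * a0 + p1 * a1)))"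

lemma info_rate_commute: "info_rate p0 p1 a0 a1 = info_rate p1 p0 a1 a0"
  by (simp add: info_rate_def add.commute)

lemma info_rate_le_of_sq_less:
  fixes p0 p1 x0 x1 :: real
  assumes p0: "p0 > 0" and p1: "p1 > 0" and pq: "p0 + p1 = 1" and "x1 \<noteq> 0" and less: "x1^2 < x0^2"
  shows "info_rate p0 p1 (x0^2) (x1^2) \<le> p0 * p1 / log_mean p0 p1 * (x0 - x1)^2"
proof -
  define K where "K = p0 * p1 / log_mean p0 p1"
  have K: "K > 0"
    using p0 p1 log_mean_pos by (simp add: K_def)
  define m where "m = p0 * x0^2 + p1 * x1^2"
  define X where "X = p0 * x0^2 / m"
  have x1: "x1^2 > 0"
    using assms(4) by simp
  have "m < (p0 + p1) * x0^2"
    using p1 less by (simp add: m_def distrib_right)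
  then have m: "m > 0" "m < x0^2"
    using p0 p1 pq x1 by (auto simp: m_def intro: add_nonneg_pos)
  have oneX: "1 - X = p1 * x1^2 / m"
    using m(1) pq by (simp add: X_def m_def field_simps)
  have "p1 * x1^2 / m > 0"
    using m p1 x1 by simp
  then have X: "p0 < X" "X < 1"
    using m p0 oneX by (simp add: X_def less_divide_eq, linarith)
  define u w where "u = ln (x0^2 / m)" and "w = ln (x1^2 / m)"
  have "x0^2 / m = X / p0" "x1^2 / m = (1 - X) / p1"
    using p0 p1 oneX by (simp_all add: X_def)
  moreover have "X / p0 > 1" "(1 - X) / p1 < 1"
    using p0 p1 pq X by simp_all
  ultimately have uw: "u = ln (X / p0)" "w = ln ((1 - X) / p1)" "u > 0" "w < 0"
    using p1 X by (simp_all add: u_def w_def)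
  have "log_mean p0 p1 \<le> p1 / u + p0 / w"
    using log_mean_le_inverse_ln_sum[OF p0 p1 pq X] uw by simp
  then have "(p1 / u + p0 / w) * (u * w) \<le> log_mean p0 p1 * (u * w)"
    using uw(3,4) by (intro mult_right_mono_neg mult_nonneg_nonpos) auto
  moreover have "(p1 / u + p0 / w) * (u * w) = p0 * u + p1 * w"
    using uw(3,4) by (simp add: field_simps)
  ultimately have "p0 * u + p1 * w \<le> log_mean p0 p1 * (u * w)"
    by simp
  then have "K * (p0 * u + p1 * w) \<le> K * (log_mean p0 p1 * (u * w))"
    using K by (intro mult_left_mono) auto
  also have "\<dots> = (p0 * u) * (p1 * w)"
    using log_mean_pos[OF p0 p1] by (simp add: K_def)
  finally have "(p0 * u) * (p1 * w) \<ge> K * (p0 * u + p1 * w)" .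
  moreover have "p1 * w < K"
    using K p1 uw(4) mult_pos_neg[of p1 w] by linarith
  ultimately have "(p0 * u) * x0^2 + (p1 * w) * x1^2 \<le> K * (x0 - x1)^2"
    by (intro quadratic_form_le_square_diff)
  moreover have "x0 \<noteq> 0"
    using less by auto
  ultimately show ?thesis
    using assms(4) by (simp add: info_rate_def K_def u_def w_def m_def algebra_simps)
qed

lemma info_rate_le_of_sq_le:
  fixes p0 p1 x0 x1 :: real
  assumes p0: "p0 > 0" and p1: "p1 > 0" and pq: "p0 + p1 = 1" and le: "x1^2 \<le> x0^2"
  shows "info_rate p0 p1 (x0^2) (x1^2) \<le> p0 * p1 / log_mean p0 p1 * (x0 - x1)^2"
proof -
  define K where "K = p0 * p1 / log_mean p0 p1"
  have K: "K > 0"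
    using p0 p1 log_mean_pos by (simp add: K_def)
  consider "x1 = 0" | "x1^2 = x0^2" | "x1 \<noteq> 0" "x1^2 < x0^2"
    using le by fastforce
  then show ?thesis
  proof cases
    case 1
    have "log_mean p0 p1 \<le> log_mean p0 1"
      using p0 p1 pq by (intro log_mean_mono) auto
    also have "\<dots> = p1 / ln (1 / p0)"
    proof -
      have "p0 - 1 = - p1" "p0 \<noteq> 1"
        using pq p1 by auto
      then show ?thesis
        using p0 by (simp add: log_mean_def ln_div)
    qed
    finally have "p0 * ln (1 / p0) \<le> K"
      using p0 p1 pq log_mean_pos[OF p0 p1] by (simp add: K_def field_simps)
    then have "p0 * ln (1 / p0) * x0^2 \<le> K * x0^2"
      by (simp add: mult_right_mono)
    then show ?thesis
      using 1 p0 by (simp add: info_rate_def K_def algebra_simps)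
  next
    case 2
    then have "info_rate p0 p1 (x0^2) (x1^2) = 0"
      using pq by (simp add: info_rate_def distrib_right[symmetric])
    then show ?thesis
      using K by (simp add: K_def[symmetric])
  next
    case 3
    then show ?thesis
      using info_rate_le_of_sq_less[OF p0 p1 pq] by blast
  qed
qed

lemma info_rate_le:
  fixes p0 p1 x0 x1 :: real
  assumes "p0 > 0" and "p1 > 0" and "p0 + p1 = 1"
  shows "info_rate p0 p1 (x0^2) (x1^2) \<le> p0 * p1 / log_mean p0 p1 * (x0 - x1)^2"
proof (cases "x1^2 \<le> x0^2")
  case False
  then have "info_rate p1 p0 (x1^2) (x0^2) \<le> p1 * p0 / log_mean p1 p0 * (x1 - x0)^2"
    using assms by (intro info_rate_le_of_sq_le) auto
  then show ?thesis
    by (simp add: info_rate_commute log_mean_commute power2_commute mult.commute)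
qed (use assms info_rate_le_of_sq_le in blast)

lemma info_rate_optimal:
  fixes p0 p1 t :: real
  assumes p0: "p0 > 0" and p1: "p1 > 0" and pq: "p0 + p1 = 1"
  shows "info_rate p0 p1 ((p1 * t)^2) ((p0 * t)^2) = p0 * p1 / log_mean p0 p1 * (p1 * t - p0 * t)^2"
proof (cases "t = 0 \<or> p0 = p1")
  case True
  then show ?thesis
    using pq by (auto simp: info_rate_def distrib_right[symmetric])
next
  case False
  have m: "p0 * (p1 * t)^2 + p1 * (p0 * t)^2 = p0 * p1 * t^2"
    using pq by (simp add: power2_eq_square algebra_simps) (metis distrib_left mult.commute mult.left_commute mult_1)
  have r: "(p1 * t)^2 / (p0 * p1 * t^2) = p1 / p0" "(p0 * t)^2 / (p0 * p1 * t^2) = p0 / p1"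
    using False p0 p1 by (simp_all add: power2_eq_square field_simps)
  have "info_rate p0 p1 ((p1 * t)^2) ((p0 * t)^2) = p0 * (p1 * t)^2 * ln (p1 / p0) + p1 * (p0 * t)^2 * ln (p0 / p1)"
    using False p0 p1 by (simp add: info_rate_def m r)
  also have "\<dots> = p0 * p1 * t^2 * (p1 - p0) * (ln p1 - ln p0)"
    using p0 p1 by (simp add: ln_div power2_eq_square algebra_simps)
  also have "\<dots> = p0 * p1 / log_mean p0 p1 * (p1 * t - p0 * t)^2"
    using False p0 p1 by (simp add: log_mean_def power2_eq_square field_simps)
  finally show ?thesis .
qed

lemma tendsto_quotient_at_right_0:
  fixes f :: "real \<Rightarrow> real"
  assumes "f 0 = 0" and "(f has_real_derivative D) (at 0)"
  shows "((\<lambda>d. f d / d) \<longlongrightarrow> D) (at_right 0)"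
proof -
  have "(f has_real_derivative D) (at 0 within {0<..})"
    using assms(2) by (rule has_field_derivative_at_within)
  then show ?thesis
    using assms(1) by (simp add: has_field_derivative_iff)
qed

lemma no_arrival_terms_limit:
  fixes p0 p1 a0 a1 :: real
  assumes p0: "p0 > 0" and p1: "p1 > 0" and pq: "p0 + p1 = 1"
  defines "E \<equiv> \<lambda>d. p0 * exp (- a0 * d) + p1 * exp (- a1 * d)"
  shows "((\<lambda>d. (p0 * exp (- a0 * d) * ln (exp (- a0 * d) / E d)
               + p1 * exp (- a1 * d) * ln (exp (- a1 * d) / E d)) / d) \<longlongrightarrow> 0) (at_right 0)"
proof (rule tendsto_quotient_at_right_0)
  have E: "E d > 0" for d
    using p0 p1 by (simp add: E_def add_pos_pos)
  show "p0 * exp (- a0 * 0) * ln (exp (- a0 * 0) / E 0) + p1 * exp (- a1 * 0) * ln (exp (- a1 * 0) / E 0) = 0"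
    using pq by (simp add: E_def)
  have mean: "a0 * (p0 * p0) + (a0 * (p0 * p1) + (a1 * (p0 * p1) + a1 * (p1 * p1))) = (a0 * p0 + a1 * p1) * (p0 + p1)"
    by (simp add: algebra_simps)
  show "((\<lambda>d. p0 * exp (- a0 * d) * ln (exp (- a0 * d) / E d) + p1 * exp (- a1 * d) * ln (exp (- a1 * d) / E d))
      has_real_derivative 0) (at 0)"
    using E pq unfolding E_def
    apply (auto intro!: derivative_eq_intros)
    apply (simp add: field_simps)
    apply (simp only: mean pq)
    apply simp
    done
qed

lemma arrival_prob_limit:
  fixes a :: real
  shows "((\<lambda>d. (1 - exp (- a * d)) / d) \<longlongrightarrow> a) (at_right 0)"
  by (rule tendsto_quotient_at_right_0[where f = "\<lambda>d. 1 - exp (- a * d)"]) (auto intro!: derivative_eq_intros)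

lemma arrival_term_limit:
  fixes p0 p1 a0 a1 b a :: real
  assumes "p0 * a0 + p1 * a1 > 0" and "a > 0"
  defines "F \<equiv> \<lambda>d. p0 * (1 - exp (- a0 * d)) + p1 * (1 - exp (- a1 * d))"
  shows "((\<lambda>d. b * (1 - exp (- a * d)) * ln ((1 - exp (- a * d)) / F d) / d)
          \<longlongrightarrow> b * a * ln (a / (p0 * a0 + p1 * a1))) (at_right 0)"
proof -
  have "((\<lambda>d. F d / d) \<longlongrightarrow> p0 * a0 + p1 * a1) (at_right 0)"
    unfolding F_def add_divide_distrib times_divide_eq_right[symmetric]
    by (intro tendsto_intros arrival_prob_limit)
  then have "((\<lambda>d. b * ((1 - exp (- a * d)) / d) * ln (((1 - exp (- a * d)) / d) / (F d / d)))
      \<longlongrightarrow> b * a * ln (a / (p0 * a0 + p1 * a1))) (at_right 0)"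
    using assms by (intro tendsto_intros arrival_prob_limit) auto
  moreover have "\<forall>\<^sub>F d in at_right 0. b * ((1 - exp (- a * d)) / d) * ln (((1 - exp (- a * d)) / d) / (F d / d))
      = b * (1 - exp (- a * d)) * ln ((1 - exp (- a * d)) / F d) / d"
    by (rule eventually_mono[OF eventually_at_right_less]) simp
  ultimately show ?thesis
    by (rule Lim_transform_eventually)
qed

lemma I_l_slope:
  fixes S pr :: "nat \<Rightarrow> real"
  assumes p0: "pr 0 > 0" and p1: "pr 1 > 0" and pq: "pr 0 + pr 1 = 1"
  shows "((\<lambda>d. I_l S pr l d / d) \<longlongrightarrow> info_rate (pr 0) (pr 1) (rate (S 0) l) (rate (S 1) l)) (at_right 0)"
proof -
  define a0 a1 where "a0 = rate (S 0) l" and "a1 = rate (S 1) l"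
  define E F where "E = (\<lambda>d. pr 0 * exp (- a0 * d) + pr 1 * exp (- a1 * d))"
    and "F = (\<lambda>d. pr 0 * (1 - exp (- a0 * d)) + pr 1 * (1 - exp (- a1 * d)))"
  define T where "T = (\<lambda>a p d::real. if a = 0 then 0 else p * (1 - exp (- a * d)) * ln ((1 - exp (- a * d)) / F d))"
  have a: "a0 \<ge> 0" "a1 \<ge> 0"
    by (simp_all add: a0_def a1_def rate_def)
  have T: "((\<lambda>d. T a p d / d) \<longlongrightarrow> (if a = 0 then 0 else p * a * ln (a / (pr 0 * a0 + pr 1 * a1)))) (at_right 0)"
    if "a = a0 \<or> a = a1" for a p
  proof (cases "a = 0")
    case False
    then have "pr 0 * a0 + pr 1 * a1 > 0"
      using that a p0 p1 by (auto intro: add_pos_nonneg add_nonneg_pos)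
    then show ?thesis
      using False that a arrival_term_limit[of "pr 0" a0 "pr 1" a1 a p] by (auto simp: T_def F_def)
  qed (simp add: T_def)
  define N where "N = (\<lambda>d. pr 0 * exp (- a0 * d) * ln (exp (- a0 * d) / E d)
                          + pr 1 * exp (- a1 * d) * ln (exp (- a1 * d) / E d))"
  have "((\<lambda>d. N d / d + T a0 (pr 0) d / d + T a1 (pr 1) d / d)
        \<longlongrightarrow> 0 + (if a0 = 0 then 0 else pr 0 * a0 * ln (a0 / (pr 0 * a0 + pr 1 * a1)))
              + (if a1 = 0 then 0 else pr 1 * a1 * ln (a1 / (pr 0 * a0 + pr 1 * a1)))) (at_right 0)"
    unfolding N_def E_def by (intro tendsto_add no_arrival_terms_limit T p0 p1 pq) auto
  moreover have "\<forall>\<^sub>F d in at_right 0. N d / d + T a0 (pr 0) d / d + T a1 (pr 1) d / d = I_l S pr l d / d"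
  proof (rule eventually_mono[OF eventually_at_right_less])
    fix d :: real
    assume "d > 0"
    then have "(1 - exp (- a * d) = 0) \<longleftrightarrow> a = 0" for a :: real
      by auto
    then have "I_l S pr l d = N d + T a0 (pr 0) d + T a1 (pr 1) d"
      using p0 p1 unfolding I_l_def mutual_info_bin_def chan_def N_def E_def T_def F_def a0_def a1_def
      by (simp add: Let_def)
    then show "N d / d + T a0 (pr 0) d / d + T a1 (pr 1) d / d = I_l S pr l d / d"
      by (simp add: add_divide_distrib)
  qed
  ultimately have "((\<lambda>d. I_l S pr l d / d) \<longlongrightarrow> 0 + (if a0 = 0 then 0 else pr 0 * a0 * ln (a0 / (pr 0 * a0 + pr 1 * a1)))
              + (if a1 = 0 then 0 else pr 1 * a1 * ln (a1 / (pr 0 * a0 + pr 1 * a1)))) (at_right 0)"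
    by (rule Lim_transform_eventually)
  then show ?thesis
    unfolding info_rate_def a0_def[symmetric] a1_def[symmetric] by simp
qed

theorem lemma1:
  fixes S pr :: "nat \<Rightarrow> real"
  assumes "pr 0 > 0" and "pr 1 > 0" and "pr 0 + pr 1 = 1" and "pr 0 \<noteq> pr 1"
  defines "lstar \<equiv> (S 0 * pr 0 - S 1 * pr 1) / (pr 1 - pr 0)"
  shows "(\<forall>l::real. \<exists>A B.
            ((\<lambda>d. I_l S pr lstar d / d) \<longlongrightarrow> A) (at_right 0) \<and>
            ((\<lambda>d. I_l S pr l d / d) \<longlongrightarrow> B) (at_right 0) \<and> A \<ge> B)
         \<and> pr 0 * sqrt (rate (S 0) lstar) = pr 1 * sqrt (rate (S 1) lstar)"
proof -
  define K where "K = pr 0 * pr 1 / log_mean (pr 0) (pr 1)"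
  define t where "t = (S 0 - S 1) / (pr 1 - pr 0)"
  have x0: "S 0 + lstar = pr 1 * t" and x1: "S 1 + lstar = pr 0 * t"
    using assms(4) unfolding lstar_def t_def by (simp_all add: field_simps)
  have "pr 1 * t - pr 0 * t = (pr 1 - pr 0) * t"
    by (simp add: algebra_simps)
  also have "\<dots> = S 0 - S 1"
    using assms(4) by (simp add: t_def)
  finally have opt: "info_rate (pr 0) (pr 1) (rate (S 0) lstar) (rate (S 1) lstar) = K * (S 0 - S 1)^2"
    unfolding rate_def x0 x1 using info_rate_optimal[OF assms(1-3), of t] by (simp add: K_def)
  have "info_rate (pr 0) (pr 1) (rate (S 0) l) (rate (S 1) l) \<le> K * (S 0 - S 1)^2" for l
    using info_rate_le[OF assms(1-3), of "S 0 + l" "S 1 + l"] by (simp add: rate_def K_def)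
  then have "\<forall>l. \<exists>A B. ((\<lambda>d. I_l S pr lstar d / d) \<longlongrightarrow> A) (at_right 0) \<and>
      ((\<lambda>d. I_l S pr l d / d) \<longlongrightarrow> B) (at_right 0) \<and> A \<ge> B"
    using I_l_slope[OF assms(1-3)] opt by fastforce
  moreover have "pr 0 * sqrt (rate (S 0) lstar) = pr 1 * sqrt (rate (S 1) lstar)"
    unfolding rate_def x0 x1 using assms(1,2) by (simp add: abs_mult)
  ultimately show ?thesis
    by blast
qed

end
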